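(* Let $X$ be a normal Hausdorff space which contains a subspace homeomorphic to $[0,1]$ (an arc). Then for any two distinct points $x,u\in X$ there is a continuous quotient surjection $f\colon X\to[0,1]$ with $f(x)=0$ and $f(u)=1$.
   Context: A surjection $f\colon X\to Y$ is a quotient map if for every $G\subseteq Y$, $G$ is open in $Y$ iff $f^{-1}(G)$ is open in $X$. A continuous quotient surjection $f\colon X\to[0,1]$ with $f(x)=0$, $f(u)=1$ is what the paper calls a quotient Urysohn function for $x$ and $u$. *)

theory Defs
  imports "HOL-Analysis.Analysis"
begin

end

theory Submission
  imports Defs
begin

text \<open>An arc contains a subarc missing the two given points. Extend the inverse of that
  subarc's parametrisation, together with the values 0 at \<open>x\<close> and 1 at \<open>u\<close>, to all of \<open>X\<close>
  by Tietze's theorem. The parametrisation is then a continuous section of the extension, so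
  the extension is a retraction and in particular a quotient map onto \<open>[0,1]\<close>.\<close>

lemma interval_avoiding_finite:
  fixes a b :: real
  assumes "finite F" "a < b"
  obtains c d where "a \<le> c" "c < d" "d \<le> b" "{c..d} \<inter> F = {}"
proof -
  have "\<not> {a<..<b} \<subseteq> F"
    using assms infinite_Ioo finite_subset by metis
  then obtain t where t: "t \<in> {a<..<b} - F"
    by blast
  have "open ({a<..<b} - F)"
    using assms(1) by (simp add: open_Diff finite_imp_closed)
  then obtain e where "e > 0" and e: "ball t e \<subseteq> {a<..<b} - F"
    using t open_contains_ball by metis
  have "{t - e/2..t + e/2} \<subseteq> ball t e"
    using \<open>e > 0\<close> by (auto simp: dist_real_def)
  with e have sub: "{t - e/2..t + e/2} \<subseteq> {a<..<b} - F"
    by (rule order_trans[rotated])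
  moreover have "t - e/2 \<in> {a<..<b}" "t + e/2 \<in> {a<..<b}"
    using subsetD[OF sub, of "t - e/2"] subsetD[OF sub, of "t + e/2"] \<open>e > 0\<close> by auto
  ultimately show ?thesis
    using \<open>e > 0\<close> by (intro that[of "t - e/2" "t + e/2"]) auto
qed

lemma subarc_avoiding_finite:
  assumes h: "continuous_map (top_of_set {0..1::real}) X h" "inj_on h {0..1}"
    and "finite P"
  obtains g where "continuous_map (top_of_set {0..1::real}) X g" "inj_on g {0..1}"
    "g ` {0..1} \<inter> P = {}"
proof -
  obtain c d where cd: "0 \<le> c" "c < d" "d \<le> 1" "{c..d} \<inter> (h -` P \<inter> {0..1}) = {}"
    using interval_avoiding_finite[OF finite_vimage_IntI[OF \<open>finite P\<close> h(2)], of 0 1] by auto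
  define r where "r s = (d - c) * s + c" for s :: real
  have r_image: "r ` {0..1} = {c..d}"
    using cd by (simp add: r_def image_affinity_atLeastAtMost)
  have "continuous_on {0..1} r"
    unfolding r_def by (intro continuous_intros)
  moreover have "r ` {0..1} \<subseteq> {0..1}"
    using r_image cd by auto
  ultimately have "continuous_map (top_of_set {0..1::real}) (top_of_set {0..1}) r"
    by (simp add: continuous_map_in_subtopology image_subset_iff_funcset)
  then have "continuous_map (top_of_set {0..1::real}) X (h \<circ> r)"
    using h(1) by (rule continuous_map_compose)
  moreover have "inj_on (h \<circ> r) {0..1}"
    using cd r_image by (intro comp_inj_on inj_on_subset[OF h(2)]) (auto simp: inj_on_def r_def)
  moreover have "(h \<circ> r) ` {0..1} \<inter> P = {}"
    using cd unfolding image_comp [symmetric] r_image by auto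
  ultimately show ?thesis
    using that by blast
qed

text \<open>Finitely many points of a \<open>T\<^sub>1\<close> space form a closed discrete subspace.\<close>

lemma continuous_map_closedin_Un_finite:
  assumes "continuous_map (subtopology X S) Y g" "closedin X S" "t1_space X"
    and "finite F" "g ` (topspace X \<inter> F) \<subseteq> topspace Y"
  shows "continuous_map (subtopology X (S \<union> F)) Y g"
proof (rule pasting_lemma_closed[where I = "{S, topspace X \<inter> F}" and T = id and f = "\<lambda>_. g"])
  have "(S \<union> F) \<inter> (topspace X \<inter> F) = topspace X \<inter> F" "(S \<union> F) \<inter> S = S"
    by auto
  then have "subtopology (subtopology X (S \<union> F)) (topspace X \<inter> F) = subtopology X F"
    "subtopology (subtopology X (S \<union> F)) S = subtopology X S"
    by (simp_all add: subtopology_subtopology subtopology_restrict)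
  moreover have "continuous_map (subtopology X F) Y g"
    using assms by (simp add: subtopology_eq_discrete_topology_gen_finite image_subset_iff_funcset)
  moreover have "closedin X (topspace X \<inter> F)"
    using assms by (simp add: t1_space_closedin_finite)
  ultimately show "closedin (subtopology X (S \<union> F)) (id A)"
    and "continuous_map (subtopology (subtopology X (S \<union> F)) (id A)) Y g"
    if "A \<in> {S, topspace X \<inter> F}" for A
    using that assms(1,2) by (auto intro: closedin_subset_topspace)
qed auto

lemma arc_retraction_separating_points:
  assumes "normal_space X" "Hausdorff_space X"
    and g: "continuous_map (top_of_set {0..1::real}) X g" "inj_on g {0..1}"
    and x: "x \<in> topspace X" "x \<notin> g ` {0..1}"
    and u: "u \<in> topspace X" "u \<notin> g ` {0..1}"
    and "x \<noteq> u"
  obtains f where "retraction_maps X (top_of_set {0..1::real}) f g" "f x = 0" "f u = 1"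
proof -
  define A where "A = g ` {0..1}"
  define k where "k = inv_into {0..1} g"
  define q where "q y = (if y = x then 0 else if y = u then 1 else k y)" for y
  have "compactin X A"
    unfolding A_def using g(1) by (intro image_compactin) (auto simp: compactin_subtopology)
  then have A_closed: "closedin X A"
    using \<open>Hausdorff_space X\<close> compactin_imp_closedin by blast
  have "continuous_map (subtopology X A) (top_of_set {0..1}) k"
    unfolding A_def k_def
    by (rule continuous_inverse_map[OF _ \<open>Hausdorff_space X\<close> g(1)])
      (auto simp: compact_space_subtopology compactin_subtopology g(2))
  then have "continuous_map (subtopology X A) euclideanreal q"
    by (rule continuous_map_eq[OF continuous_map_into_fulltopology])
      (use x u in \<open>auto simp: q_def A_def\<close>)
  then have "continuous_map (subtopology X (A \<union> {x, u})) euclideanreal q"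
    using A_closed \<open>Hausdorff_space X\<close>
    by (intro continuous_map_closedin_Un_finite) (auto simp: Hausdorff_imp_t1_space)
  moreover have "closedin X (A \<union> {x, u})"
    using A_closed x(1) u(1) \<open>Hausdorff_space X\<close>
    by (metis closedin_Un closedin_Hausdorff_singleton insert_is_Un)
  moreover have "q ` (A \<union> {x, u}) \<subseteq> {0..1}"
    using g(2) by (auto simp: q_def A_def k_def)
  ultimately obtain f where f: "continuous_map X euclideanreal f"
      "\<And>y. y \<in> A \<union> {x, u} \<Longrightarrow> f y = q y" "f ` topspace X \<subseteq> {0..1}"
    using Tietze_extension_closed_real_interval[OF \<open>normal_space X\<close>] by (metis zero_le_one)
  have "retraction_maps X (top_of_set {0..1::real}) f g"
    unfolding retraction_maps_def
    using f g x u by (auto simp: continuous_map_in_subtopology q_def A_def k_def)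
  moreover have "f x = 0" "f u = 1"
    using f(2) \<open>x \<noteq> u\<close> by (auto simp: q_def)
  ultimately show ?thesis
    using that by blast
qed

theorem mainTheorem8:
  fixes X :: "'a topology" and x u :: 'a
  assumes "normal_space X" and "Hausdorff_space X"
    and "\<exists>S. S \<subseteq> topspace X \<and>
           subtopology X S homeomorphic_space top_of_set {0..1::real}"
    and "x \<in> topspace X" and "u \<in> topspace X" and "x \<noteq> u"
  shows "\<exists>f. continuous_map X (top_of_set {0..1::real}) f \<and>
             f ` topspace X = {0..1} \<and>
             quotient_map X (top_of_set {0..1::real}) f \<and>
             f x = 0 \<and> f u = 1"
proof -
  obtain S where "subtopology X S homeomorphic_space top_of_set {0..1::real}"
    using assms(3) by blast
  then obtain h where "homeomorphic_map (top_of_set {0..1::real}) (subtopology X S) h"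
    by (meson homeomorphic_space homeomorphic_space_sym)
  then have "continuous_map (top_of_set {0..1::real}) X h" "inj_on h {0..1}"
    by (auto dest: homeomorphic_imp_continuous_map homeomorphic_imp_injective_map
        simp: continuous_map_in_subtopology)
  then obtain g where g: "continuous_map (top_of_set {0..1::real}) X g" "inj_on g {0..1}"
      "g ` {0..1} \<inter> {x, u} = {}"
    by (rule subarc_avoiding_finite[where P = "{x, u}"]) auto
  then have "x \<notin> g ` {0..1}" "u \<notin> g ` {0..1}"
    by auto
  then obtain f where f: "retraction_maps X (top_of_set {0..1::real}) f g" "f x = 0" "f u = 1"
    using arc_retraction_separating_points[OF assms(1,2) g(1,2) assms(4) _ assms(5) _ assms(6)] by blast
  then have "quotient_map X (top_of_set {0..1::real}) f"
    by (meson retraction_imp_quotient_map retraction_map_def)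
  moreover have "f ` topspace X = {0..1}"
    using quotient_imp_surjective_map[OF calculation] by simp
  ultimately show ?thesis
    using f unfolding retraction_maps_def by blast
qed

end
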